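(* Let $\Phi_{\vec p}=\sum_{k,l}p_{kl}U_{kl}\otimes\overline{U}_{kl}$ be a Weyl channel lying in the simplex spanned by $\Phi_{X^k}=X^k\otimes\overline{X^k}$, $k=0,\dots,N-1$ (i.e. $p_{kl}=0$ whenever $l\neq0$), and let $T(\Phi_{\vec p})=\sum_{k}q_kX^k$ with $q_k=\sum_lp_{kl}$. Then the set of eigenvalues of the superoperator $\Phi_{\vec p}$ equals the spectrum of $T(\Phi_{\vec p})$; moreover the spectrum of $\Phi_{\vec p}$ is $N$-fold degenerate: its eigenvalues $\lambda_{mn}=\sum_{k,l}\omega^{ml-nk}p_{kl}$ satisfy $\lambda_{mn}=\xi_n$ for all $m$, where $\xi_n=\sum_k\omega^{-nk}q_k$, $n=0,\dots,N-1$, are the eigenvalues of $T(\Phi_{\vec p})$.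
   Context: Let $N\ge2$, $\omega=e^{2\pi i/N}$, $X|j\rangle=|j\oplus1\rangle$ (addition mod $N$), $Z=\mathrm{diag}(1,\omega,\dots,\omega^{N-1})$, Weyl unitaries $U_{kl}=X^kZ^l$, $k,l\in\{0,\dots,N-1\}$. Maps on $N\times N$ matrices are identified with superoperators ($N^2\times N^2$ matrices) acting on $|A\rangle\rangle=\sum A_{ij}|i\rangle|j\rangle$, so $\rho\mapsto K\rho K^\dagger$ corresponds to $K\otimes\overline{K}$. A Weyl channel is $\Phi_{\vec p}=\sum_{k,l}p_{kl}U_{kl}\otimes\overline{U}_{kl}$ with $(p_{kl})$ a probability vector. *)

theory Defs
  imports Complex_Main "Jordan_Normal_Form.Char_Poly"
begin

definition omega :: "nat \<Rightarrow> complex" where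
  "omega N = cis (2 * pi / real N)"

definition shiftX :: "nat \<Rightarrow> complex mat" where
  "shiftX N = mat N N (\<lambda>(i, j). if i = (j + 1) mod N then 1 else 0)"

definition clockZ :: "nat \<Rightarrow> complex mat" where
  "clockZ N = mat N N (\<lambda>(i, j). if i = j then omega N ^ i else 0)"

definition weylU :: "nat \<Rightarrow> nat \<Rightarrow> nat \<Rightarrow> complex mat" where
  "weylU N k l = (shiftX N ^\<^sub>m k) * (clockZ N ^\<^sub>m l)"

definition conj_mat :: "complex mat \<Rightarrow> complex mat" where
  "conj_mat A = map_mat cnj A"

(* Kronecker product of two N x N matrices, with index (i,j) -> i*N + j,
   matching |A>> = sum A_ij |i>|j> *)
definition kron :: "nat \<Rightarrow> complex mat \<Rightarrow> complex mat \<Rightarrow> complex mat" where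
  "kron N A B = mat (N * N) (N * N)
     (\<lambda>(r, c). A $$ (r div N, c div N) * B $$ (r mod N, c mod N))"

(* matrix sums written entrywise (matrices of fixed dimension) *)
definition weyl_channel :: "nat \<Rightarrow> (nat \<Rightarrow> nat \<Rightarrow> real) \<Rightarrow> complex mat" where
  "weyl_channel N p = mat (N * N) (N * N) (\<lambda>rc. \<Sum>k<N. \<Sum>l<N.
      complex_of_real (p k l) * kron N (weylU N k l) (conj_mat (weylU N k l)) $$ rc)"

definition qmarg :: "nat \<Rightarrow> (nat \<Rightarrow> nat \<Rightarrow> real) \<Rightarrow> nat \<Rightarrow> real" where
  "qmarg N p k = (\<Sum>l<N. p k l)"

definition Tmap :: "nat \<Rightarrow> (nat \<Rightarrow> nat \<Rightarrow> real) \<Rightarrow> complex mat" where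
  "Tmap N p = mat N N (\<lambda>rc. \<Sum>k<N. complex_of_real (qmarg N p k) * (shiftX N ^\<^sub>m k) $$ rc)"

definition lam :: "nat \<Rightarrow> (nat \<Rightarrow> nat \<Rightarrow> real) \<Rightarrow> nat \<Rightarrow> nat \<Rightarrow> complex" where
  "lam N p m n = (\<Sum>k<N. \<Sum>l<N.
      omega N powi (int m * int l - int n * int k) * complex_of_real (p k l))"

definition xi :: "nat \<Rightarrow> (nat \<Rightarrow> nat \<Rightarrow> real) \<Rightarrow> nat \<Rightarrow> complex" where
  "xi N p n = (\<Sum>k<N. omega N powi (- (int n * int k)) * complex_of_real (qmarg N p k))"

end

theory Submission
  imports Defs "HOL-Library.Real_Mod" "HOL-Number_Theory.Cong"
begin

(*
  Under the support condition (p k l = 0 for l > 0), and because X is a real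
  matrix, the channel is Phi = sum_k q_k X^k (x) X^k while T = sum_k q_k X^k.
  The discrete Fourier vectors f_n(j) = omega^(n j) are common eigenvectors of all
  shift powers, X^k f_n = omega^(-n k) f_n.  So the Fourier matrix F diagonalises
  T with eigenvalues xi_n, and F (x) F diagonalises Phi with eigenvalue xi_(a+b)
  on f_a (x) f_b; for fixed a, the residue of a + b runs through all of Z/N, so
  every xi_n occurs exactly N times.  F is invertible since its entrywise
  conjugate is N times its inverse (orthogonality of characters).
*)

lemma sum_lessThan_mult:
  fixes m n :: nat
  shows "(\<Sum>r<m * n. g r) = (\<Sum>i<m. \<Sum>j<n. g (i * n + j))"
  unfolding sum.nat_group[symmetric]
  using sum.shift_bounds_nat_ivl[of g 0 "_ * n" n]
  by (intro sum.cong[OF refl]) (simp add: atLeast0LessThan add.commute)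

lemma prod_lessThan_mult:
  fixes m n :: nat
  shows "(\<Prod>r<m * n. g r) = (\<Prod>i<m. \<Prod>j<n. g (i * n + j))"
  unfolding prod.nat_group[symmetric]
  using prod.shift_bounds_nat_ivl[of g 0 "_ * n" n]
  by (intro prod.cong[OF refl]) (simp add: atLeast0LessThan add.commute)

lemma bij_betw_add_mod:
  fixes N k :: nat
  assumes "N > 0"
  shows "bij_betw (\<lambda>j. (j + k) mod N) {..<N} {..<N}"
proof -
  have "inj_on (\<lambda>j. (j + k) mod N) {..<N}"
  proof (rule inj_onI)
    fix x y assume "x \<in> {..<N}" "y \<in> {..<N}" "(x + k) mod N = (y + k) mod N"
    then have "[x = y] (mod N)"
      by (simp flip: cong_def add: cong_add_rcancel_nat)
    with \<open>x \<in> {..<N}\<close> \<open>y \<in> {..<N}\<close> show "x = y"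
      by (simp add: cong_def)
  qed
  moreover have "(\<lambda>j. (j + k) mod N) ` {..<N} \<subseteq> {..<N}"
    using assms by auto
  ultimately show ?thesis
    by (simp add: bij_betw_def endo_inj_surj)
qed

lemma prod_lessThan_add_mod:
  fixes N k :: nat
  assumes "N > 0"
  shows "(\<Prod>j<N. g ((j + k) mod N)) = (\<Prod>j<N. g j)"
  using prod.reindex_bij_betw[OF bij_betw_add_mod[OF assms]] .

lemma sum_lessThan_eq_first:
  fixes N :: nat
  assumes "N > 0" and "\<And>l. 0 < l \<Longrightarrow> l < N \<Longrightarrow> f l = 0"
  shows "(\<Sum>l<N. f l) = f 0"
  using assms by (subst sum.remove[of _ 0]) auto

lemma omega_nonzero [simp]: "omega N \<noteq> 0"
  by (simp add: omega_def)

lemma omega_powi_eq_1_iff: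
  assumes "N > 0"
  shows "omega N powi d = 1 \<longleftrightarrow> int N dvd d"
proof -
  have cis_1: "cis (x * (2 * pi)) = 1 \<longleftrightarrow> (\<exists>m. x = of_int m)" for x
    by (simp add: cis_eq_1_iff)
  have "omega N powi d = cis (of_int d / real N * (2 * pi))"
    by (simp add: omega_def cis_power_int)
  then have "omega N powi d = 1 \<longleftrightarrow> (\<exists>m. of_int d / real N = of_int m)"
    by (simp only: cis_1)
  also have "\<dots> \<longleftrightarrow> (\<exists>m. d = int N * m)"
  proof -
    have "of_int d / real N = of_int m \<longleftrightarrow> real_of_int d = real_of_int (int N * m)" for m
      using assms by (simp add: divide_eq_eq mult.commute)
    then show ?thesis
      by (simp only: of_int_eq_iff)
  qed
  finally show ?thesis
    by (simp add: dvd_def)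
qed

lemma omega_powi_cong:
  assumes "N > 0" and "[a = b] (mod int N)"
  shows "omega N powi a = omega N powi b"
proof -
  have "omega N powi (a - b) = 1"
    using assms by (simp add: omega_powi_eq_1_iff cong_iff_dvd_diff)
  moreover have "omega N powi a = omega N powi (a - b) * omega N powi b"
    using power_int_add[of "omega N" "a - b" b] by simp
  ultimately show ?thesis
    by simp
qed

lemma sum_omega_powi:
  assumes "N > 0"
  shows "(\<Sum>j<N. omega N powi (d * int j)) = (if int N dvd d then of_nat N else 0)"
proof -
  define z where "z = omega N powi d"
  have powers: "omega N powi (d * int j) = z ^ j" for j
    by (simp add: z_def power_int_mult)
  have "z ^ N = 1"
    using assms by (simp flip: powers add: omega_powi_eq_1_iff)
  moreover have "z = 1 \<longleftrightarrow> int N dvd d"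
    using assms by (simp add: z_def omega_powi_eq_1_iff)
  ultimately show ?thesis
    by (auto simp: powers geometric_sum)
qed

lemmas dim_mat_diag [simp] = carrier_matD[OF mat_diag_dim]

lemma char_poly_eigenbasis:
  fixes A P Q :: "'a :: field mat"
  assumes A: "A \<in> carrier_mat n n" and P: "P \<in> carrier_mat n n"
    and Q: "Q \<in> carrier_mat n n" and QP: "Q * P = c \<cdot>\<^sub>m 1\<^sub>m n" and "c \<noteq> 0"
    and AP: "A * P = P * mat_diag n d"
  shows "char_poly A = (\<Prod>i<n. [:- d i, 1:])"
proof -
  define Q' where "Q' = inverse c \<cdot>\<^sub>m Q"
  have Q': "Q' \<in> carrier_mat n n"
    using Q by (simp add: Q'_def)
  have Q'P: "Q' * P = 1\<^sub>m n"
    using Q P \<open>c \<noteq> 0\<close> by (simp add: Q'_def mult_smult_assoc_mat QP) (rule eq_matI; simp)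
  have PQ': "P * Q' = 1\<^sub>m n"
    by (rule mat_mult_left_right_inverse[OF Q' P Q'P])
  have "A = A * (P * Q')"
    using A by (simp add: PQ')
  also have "\<dots> = P * mat_diag n d * Q'"
    using assoc_mult_mat[OF A P Q'] by (simp add: AP)
  finally have "similar_mat A (mat_diag n d)"
    using A P Q' PQ' Q'P by (intro similar_matI[of A _ P Q' n]) auto
  then have "char_poly A = char_poly (mat_diag n d)"
    by (rule char_poly_similar)
  also have "\<dots> = (\<Prod>a\<leftarrow>map d [0..<n]. [:- a, 1:])"
    by (subst char_poly_upper_triangular[of _ n])
      (auto simp: upper_triangular_def mat_diag_def diag_mat_def
        intro: arg_cong[where f = prod_list])
  also have "\<dots> = (\<Prod>i<n. [:- d i, 1:])"
    by (simp add: prod.distinct_set_conv_list[symmetric, of "[0..<n]", simplified] atLeast0LessThan)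
  finally show ?thesis .
qed

lemma index_mult_mat_weighted_sum:
  fixes A B :: "'a :: semiring_0 mat"
  assumes "A \<in> carrier_mat n n" "B \<in> carrier_mat n m"
    and "\<And>k. k \<in> K \<Longrightarrow> C k \<in> carrier_mat n n"
    and "\<And>r s. r < n \<Longrightarrow> s < n \<Longrightarrow> A $$ (r, s) = (\<Sum>k\<in>K. w k * C k $$ (r, s))"
    and "i < n" "j < m"
  shows "(A * B) $$ (i, j) = (\<Sum>k\<in>K. w k * (C k * B) $$ (i, j))"
proof -
  have "(A * B) $$ (i, j) = (\<Sum>s<n. (\<Sum>k\<in>K. w k * C k $$ (i, s)) * B $$ (s, j))"
    using assms by (simp add: scalar_prod_def atLeast0LessThan)
  also have "\<dots> = (\<Sum>k\<in>K. w k * (\<Sum>s<n. C k $$ (i, s) * B $$ (s, j)))"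
    by (simp add: sum_distrib_right sum_distrib_left mult.assoc) (rule sum.swap)
  also have "\<dots> = (\<Sum>k\<in>K. w k * (C k * B) $$ (i, j))"
  proof (intro sum.cong refl)
    fix k assume "k \<in> K"
    then have "C k \<in> carrier_mat n n"
      by (rule assms(3))
    then show "w k * (\<Sum>s<n. C k $$ (i, s) * B $$ (s, j)) = w k * (C k * B) $$ (i, j)"
      using assms by (simp add: scalar_prod_def atLeast0LessThan)
  qed
  finally show ?thesis .
qed

lemma shiftX_carrier [simp]: "shiftX N \<in> carrier_mat N N"
  by (simp add: shiftX_def)

lemma shiftX_dim [simp]: "dim_row (shiftX N) = N" "dim_col (shiftX N) = N"
  by (simp_all add: shiftX_def)

lemma shiftX_index:
  "i < N \<Longrightarrow> j < N \<Longrightarrow> shiftX N $$ (i, j) = (if i = (j + 1) mod N then 1 else 0)"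
  by (simp add: shiftX_def)

lemma shiftX_power:
  "shiftX N ^\<^sub>m k = mat N N (\<lambda>(i, j). if i = (j + k) mod N then 1 else 0)"
proof (induction k)
  case 0
  show ?case
    by (rule eq_matI) (auto simp: shiftX_def)
next
  case (Suc k)
  let ?S = "\<lambda>k. mat N N (\<lambda>(i, j). if i = (j + k) mod N then 1 else (0 :: complex))"
  have entry: "(?S k * shiftX N) $$ (i, j) = ?S (Suc k) $$ (i, j)" if "i < N" "j < N" for i j
  proof -
    have "(?S k * shiftX N) $$ (i, j)
        = (\<Sum>t<N. if t = (j + 1) mod N then (if i = (t + k) mod N then 1 else 0) else 0)"
      using that by (simp add: shiftX_index scalar_prod_def atLeast0LessThan del: sum.delta)
        (intro sum.cong; auto)
    also have "\<dots> = ?S (Suc k) $$ (i, j)"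
      using that by (simp add: mod_add_left_eq)
    finally show ?thesis .
  qed
  have "?S k * shiftX N = ?S (Suc k)"
    by (intro eq_matI entry) simp_all
  then show ?case
    by (simp add: Suc.IH)
qed

definition fourier_mat :: "nat \<Rightarrow> int \<Rightarrow> complex mat" where
  "fourier_mat N s = mat N N (\<lambda>(i, j). omega N powi (s * int i * int j))"

lemma fourier_mat_carrier [simp]: "fourier_mat N s \<in> carrier_mat N N"
  by (simp add: fourier_mat_def)

lemma fourier_mat_dim [simp]: "dim_row (fourier_mat N s) = N" "dim_col (fourier_mat N s) = N"
  by (simp_all add: fourier_mat_def)

lemma fourier_mat_inverse:
  assumes "N > 0"
  shows "fourier_mat N (- 1) * fourier_mat N 1 = of_nat N \<cdot>\<^sub>m 1\<^sub>m N"
proof -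
  have entry: "(fourier_mat N (- 1) * fourier_mat N 1) $$ (i, j) = (of_nat N \<cdot>\<^sub>m 1\<^sub>m N) $$ (i, j)"
    if ij: "i < N" "j < N" for i j
  proof -
    have "(fourier_mat N (- 1) * fourier_mat N 1) $$ (i, j)
        = (\<Sum>t<N. omega N powi ((int j - int i) * int t))"
      using ij by (simp add: fourier_mat_def scalar_prod_def atLeast0LessThan flip: power_int_add)
        (intro sum.cong; simp add: algebra_simps)
    moreover have "int N dvd int j - int i \<longleftrightarrow> i = j"
      using ij by (simp flip: cong_iff_dvd_diff add: cong_int_iff cong_def eq_commute)
    ultimately show ?thesis
      using assms ij by (simp add: sum_omega_powi)
  qed
  show ?thesis
    by (intro eq_matI entry) simp_all
qed

lemma shiftX_power_mult_fourier:
  assumes "N > 0"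
  shows "shiftX N ^\<^sub>m k * fourier_mat N 1
    = fourier_mat N 1 * mat_diag N (\<lambda>n. omega N powi (- (int n * int k)))"
    (is "_ = ?F * ?D")
proof -
  define \<sigma> where "\<sigma> j = (j + k) mod N" for j
  have "[int (\<sigma> j) * int n - int k * int n = int j * int n] (mod int N)" for j n
  proof -
    have "[int (\<sigma> j) = int j + int k] (mod int N)"
      by (simp add: \<sigma>_def cong_def of_nat_mod)
    then have "[int (\<sigma> j) * int n - int k * int n
        = (int j + int k) * int n - int k * int n] (mod int N)"
      by (intro cong_diff cong_mult cong_refl)
    then show ?thesis
      by (simp add: algebra_simps)
  qed
  then have shifted:
    "omega N powi (int j * int n) = omega N powi (int (\<sigma> j) * int n - int k * int n)" for j n
    using assms by (simp add: omega_powi_cong cong_sym)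
  have entry: "(shiftX N ^\<^sub>m k * ?F) $$ (i, n) = (?F * ?D) $$ (i, n)"
    if i: "i < N" and n: "n < N" for i n
  proof -
    have "(shiftX N ^\<^sub>m k * ?F) $$ (i, n)
        = (\<Sum>j<N. if \<sigma> j = i then omega N powi (int j * int n) else 0)"
      using i n
      by (simp add: shiftX_power fourier_mat_def scalar_prod_def atLeast0LessThan \<sigma>_def
          del: sum.delta)
        (intro sum.cong; auto)
    also have "\<dots> = (\<Sum>j<N. if \<sigma> j = i then omega N powi (int (\<sigma> j) * int n - int k * int n) else 0)"
      by (simp only: shifted)
    also have "\<dots> = (\<Sum>m<N. if m = i then omega N powi (int m * int n - int k * int n) else 0)"
      using sum.reindex_bij_betw[OF bij_betw_add_mod[OF assms, of k]] by (simp only: \<sigma>_def)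
    also have "\<dots> = omega N powi (int i * int n) * omega N powi (- (int n * int k))"
      using i by (simp flip: power_int_add add: algebra_simps)
    also have "\<dots> = (?F * ?D) $$ (i, n)"
      using i n by (simp add: mat_diag_mult_right[of _ N N] fourier_mat_def)
    finally show ?thesis .
  qed
  show ?thesis
    by (intro eq_matI entry) (simp_all add: shiftX_power)
qed

lemma kron_carrier [simp]: "kron N A B \<in> carrier_mat (N * N) (N * N)"
  by (simp add: kron_def)

lemma kron_dim [simp]: "dim_row (kron N A B) = N * N" "dim_col (kron N A B) = N * N"
  by (simp_all add: kron_def)

lemma kron_mult:
  assumes "A \<in> carrier_mat N N" "B \<in> carrier_mat N N" "C \<in> carrier_mat N N" "D \<in> carrier_mat N N"
  shows "kron N A B * kron N C D = kron N (A * C) (B * D)"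
proof -
  have entry: "(kron N A B * kron N C D) $$ (r, c) = kron N (A * C) (B * D) $$ (r, c)"
    if rc: "r < N * N" "c < N * N" for r c
  proof -
    have div: "r div N < N" "c div N < N"
      using rc by (simp_all add: less_mult_imp_div_less)
    have "(kron N A B * kron N C D) $$ (r, c) = (\<Sum>s<N * N.
        A $$ (r div N, s div N) * B $$ (r mod N, s mod N)
        * (C $$ (s div N, c div N) * D $$ (s mod N, c mod N)))"
      using rc by (simp add: kron_def scalar_prod_def atLeast0LessThan)
    also have "\<dots> = (\<Sum>i<N. \<Sum>j<N.
        A $$ (r div N, i) * B $$ (r mod N, j) * (C $$ (i, c div N) * D $$ (j, c mod N)))"
      by (subst sum_lessThan_mult) (auto intro!: sum.cong)
    also have "\<dots> = (\<Sum>i<N. A $$ (r div N, i) * C $$ (i, c div N))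
        * (\<Sum>j<N. B $$ (r mod N, j) * D $$ (j, c mod N))"
      by (simp add: sum_product mult_ac)
    also have "\<dots> = kron N (A * C) (B * D) $$ (r, c)"
      using assms rc div by (simp add: kron_def scalar_prod_def atLeast0LessThan)
    finally show ?thesis .
  qed
  show ?thesis
    by (intro eq_matI entry) simp_all
qed

lemma kron_smult_one: "kron N (a \<cdot>\<^sub>m 1\<^sub>m N) (b \<cdot>\<^sub>m 1\<^sub>m N) = (a * b) \<cdot>\<^sub>m 1\<^sub>m (N * N)"
proof -
  have entry: "kron N (a \<cdot>\<^sub>m 1\<^sub>m N) (b \<cdot>\<^sub>m 1\<^sub>m N) $$ (r, c) = ((a * b) \<cdot>\<^sub>m 1\<^sub>m (N * N)) $$ (r, c)"
    if rc: "r < N * N" "c < N * N" for r c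
  proof -
    have "N > 0"
      using rc by (cases N) simp_all
    moreover have "r = c \<longleftrightarrow> r div N = c div N \<and> r mod N = c mod N"
      by (metis div_mult_mod_eq)
    ultimately show ?thesis
      using rc by (simp add: kron_def less_mult_imp_div_less)
  qed
  show ?thesis
    by (intro eq_matI entry) simp_all
qed

lemma Tmap_carrier [simp]: "Tmap N p \<in> carrier_mat N N"
  by (simp add: Tmap_def)

lemma weyl_channel_carrier [simp]: "weyl_channel N p \<in> carrier_mat (N * N) (N * N)"
  by (simp add: weyl_channel_def)

lemma xi_mod:
  assumes "N > 0"
  shows "xi N p (n mod N) = xi N p n"
  unfolding xi_def
proof (intro sum.cong refl)
  fix k
  have "[int (n mod N) = int n] (mod int N)"
    by (simp add: cong_def of_nat_mod)
  then have "[- (int (n mod N) * int k) = - (int n * int k)] (mod int N)"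
    by (simp add: cong_minus_minus_iff cong_scalar_right)
  then show "omega N powi (- (int (n mod N) * int k)) * of_real (qmarg N p k)
      = omega N powi (- (int n * int k)) * of_real (qmarg N p k)"
    using assms by (simp add: omega_powi_cong)
qed

lemma Tmap_mult_fourier:
  assumes "N > 0"
  shows "Tmap N p * fourier_mat N 1 = fourier_mat N 1 * mat_diag N (xi N p)"
    (is "_ = ?F * ?D")
proof -
  have entry: "(Tmap N p * ?F) $$ (i, n) = (?F * ?D) $$ (i, n)" if i: "i < N" and n: "n < N" for i n
  proof -
    have "(Tmap N p * ?F) $$ (i, n)
        = (\<Sum>k<N. of_real (qmarg N p k) * (shiftX N ^\<^sub>m k * ?F) $$ (i, n))"
      using i n by (intro index_mult_mat_weighted_sum[of _ N]) (auto simp: Tmap_def shiftX_power)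
    also have "\<dots> = ?F $$ (i, n) * xi N p n"
      using assms i n
      by (simp add: shiftX_power_mult_fourier mat_diag_mult_right[of _ N N] xi_def
          sum_distrib_left mult_ac)
    also have "\<dots> = (?F * ?D) $$ (i, n)"
      using i n by (simp add: mat_diag_mult_right[of _ N N])
    finally show ?thesis .
  qed
  show ?thesis
    by (intro eq_matI entry) (simp_all add: Tmap_def)
qed

lemma char_poly_Tmap:
  assumes "N > 0"
  shows "char_poly (Tmap N p) = (\<Prod>n<N. [:- xi N p n, 1:])"
  by (rule char_poly_eigenbasis[OF Tmap_carrier fourier_mat_carrier fourier_mat_carrier
        fourier_mat_inverse[OF assms] _ Tmap_mult_fourier[OF assms]])
    (use assms in simp)

context
  fixes N :: nat and p :: "nat \<Rightarrow> nat \<Rightarrow> real"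
  assumes N: "N > 0"
    and support: "\<And>k l. k < N \<Longrightarrow> l < N \<Longrightarrow> l \<noteq> 0 \<Longrightarrow> p k l = 0"
begin

lemma qmarg_eq_first: "k < N \<Longrightarrow> qmarg N p k = p k 0"
  unfolding qmarg_def using N support by (intro sum_lessThan_eq_first) auto

lemma lam_eq_xi: "lam N p m n = xi N p n"
proof -
  have "lam N p m n = (\<Sum>k<N. omega N powi (- (int n * int k)) * of_real (p k 0))"
    unfolding lam_def using N support by (intro sum.cong refl; subst sum_lessThan_eq_first) auto
  also have "\<dots> = xi N p n"
    unfolding xi_def by (intro sum.cong refl) (simp add: qmarg_eq_first)
  finally show ?thesis .
qed

lemma weyl_channel_index:
  assumes "r < N * N" "s < N * N"
  shows "weyl_channel N p $$ (r, s)
    = (\<Sum>k<N. of_real (qmarg N p k) * kron N (shiftX N ^\<^sub>m k) (shiftX N ^\<^sub>m k) $$ (r, s))"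
proof -
  have weylU_0: "weylU N k 0 = shiftX N ^\<^sub>m k" for k
    by (simp add: weylU_def clockZ_def shiftX_power)
  have conj_shift: "conj_mat (shiftX N ^\<^sub>m k) = shiftX N ^\<^sub>m k" for k
    by (rule eq_matI) (simp_all add: conj_mat_def shiftX_power)
  show ?thesis
    unfolding weyl_channel_def using assms N support
    by (simp, intro sum.cong refl; subst sum_lessThan_eq_first)
      (auto simp: qmarg_eq_first weylU_0 conj_shift)
qed

lemma weyl_channel_mult_fourier:
  "weyl_channel N p * kron N (fourier_mat N 1) (fourier_mat N 1)
    = kron N (fourier_mat N 1) (fourier_mat N 1)
      * mat_diag (N * N) (\<lambda>c. xi N p (c div N + c mod N))"
    (is "_ = ?FF * ?D")
proof -
  let ?F = "fourier_mat N 1"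
  define D where "D k = mat_diag N (\<lambda>n. omega N powi (- (int n * int k)))" for k
  have entry: "(weyl_channel N p * ?FF) $$ (r, c) = (?FF * ?D) $$ (r, c)"
    if rc: "r < N * N" "c < N * N" for r c
  proof -
    have div: "r div N < N" "c div N < N" and mod: "r mod N < N" "c mod N < N"
      using rc N by (simp_all add: less_mult_imp_div_less)
    have "(weyl_channel N p * ?FF) $$ (r, c) = (\<Sum>k<N.
        of_real (qmarg N p k) * (kron N (shiftX N ^\<^sub>m k) (shiftX N ^\<^sub>m k) * ?FF) $$ (r, c))"
      using rc by (intro index_mult_mat_weighted_sum[of _ "N * N"]) (auto simp: weyl_channel_index)
    also have "\<dots> = (\<Sum>k<N. of_real (qmarg N p k) * kron N (?F * D k) (?F * D k) $$ (r, c))"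
      using N by (simp add: kron_mult D_def shiftX_power_mult_fourier)
    also have "\<dots> = (\<Sum>k<N. of_real (qmarg N p k)
        * (?F $$ (r div N, c div N) * ?F $$ (r mod N, c mod N)
          * omega N powi (- (int (c div N + c mod N) * int k))))"
    proof (intro sum.cong refl)
      fix k
      have "omega N powi (- (int (c div N) * int k)) * omega N powi (- (int (c mod N) * int k))
          = omega N powi (- (int (c div N + c mod N) * int k))"
        by (simp flip: power_int_add add: algebra_simps)
      then show "of_real (qmarg N p k) * kron N (?F * D k) (?F * D k) $$ (r, c)
          = of_real (qmarg N p k) * (?F $$ (r div N, c div N) * ?F $$ (r mod N, c mod N)
            * omega N powi (- (int (c div N + c mod N) * int k)))"
        using rc div mod by (simp add: D_def kron_def mat_diag_mult_right[of _ N N] mult_ac)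
    qed
    also have "\<dots> = (?FF * ?D) $$ (r, c)"
      using rc
      by (simp add: mat_diag_mult_right[of _ "N * N" "N * N"] kron_def xi_def
          sum_distrib_left mult_ac)
    finally show ?thesis .
  qed
  show ?thesis
    by (intro eq_matI entry) (simp_all add: weyl_channel_def)
qed

lemma char_poly_weyl_channel:
  "char_poly (weyl_channel N p) = (\<Prod>m<N. \<Prod>n<N. [:- xi N p n, 1:])"
proof -
  let ?FF = "\<lambda>s. kron N (fourier_mat N s) (fourier_mat N s)"
  have inverse: "?FF (- 1) * ?FF 1 = (of_nat N * of_nat N) \<cdot>\<^sub>m 1\<^sub>m (N * N)"
    using N by (simp add: kron_mult fourier_mat_inverse kron_smult_one)
  have "char_poly (weyl_channel N p) = (\<Prod>c<N * N. [:- xi N p (c div N + c mod N), 1:])"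
    by (rule char_poly_eigenbasis[OF weyl_channel_carrier kron_carrier kron_carrier inverse _
          weyl_channel_mult_fourier])
      (use N in simp)
  also have "\<dots> = (\<Prod>a<N. \<Prod>b<N. [:- xi N p ((b + a) mod N), 1:])"
    by (subst prod_lessThan_mult) (auto intro!: prod.cong simp: xi_mod[OF N] add.commute)
  also have "\<dots> = (\<Prod>a<N. \<Prod>n<N. [:- xi N p n, 1:])"
    by (rule prod.cong[OF refl]) (rule prod_lessThan_add_mod[OF N])
  finally show ?thesis .
qed

end

theorem proposition3:
  fixes N :: nat and p :: "nat \<Rightarrow> nat \<Rightarrow> real"
  assumes "N \<ge> 2"
    and "\<And>k l. k < N \<Longrightarrow> l < N \<Longrightarrow> p k l \<ge> 0"
    and "(\<Sum>k<N. \<Sum>l<N. p k l) = 1"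
    and "\<And>k l. k < N \<Longrightarrow> l < N \<Longrightarrow> l \<noteq> 0 \<Longrightarrow> p k l = 0"
  shows "{e. eigenvalue (weyl_channel N p) e} = {e. eigenvalue (Tmap N p) e}
    \<and> char_poly (weyl_channel N p) = (\<Prod>m<N. \<Prod>n<N. [:- lam N p m n, 1:])
    \<and> char_poly (Tmap N p) = (\<Prod>n<N. [:- xi N p n, 1:])
    \<and> (\<forall>m<N. \<forall>n<N. lam N p m n = xi N p n)"
proof -
  have N: "N > 0"
    using assms(1) by simp
  have lam: "lam N p m n = xi N p n" for m n
    by (rule lam_eq_xi[OF N assms(4)])
  have char_T: "char_poly (Tmap N p) = (\<Prod>n<N. [:- xi N p n, 1:])"
    by (rule char_poly_Tmap[OF N])
  have char_\<Phi>: "char_poly (weyl_channel N p) = (\<Prod>m<N. \<Prod>n<N. [:- xi N p n, 1:])"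
    by (rule char_poly_weyl_channel[OF N assms(4)])
  have "eigenvalue (weyl_channel N p) e \<longleftrightarrow> eigenvalue (Tmap N p) e" for e
    using N by (simp add: eigenvalue_root_char_poly[of _ "N * N"] eigenvalue_root_char_poly[of _ N]
        char_T char_\<Phi> poly_prod)
  then show ?thesis
    using char_T char_\<Phi> by (simp add: lam)
qed

end
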